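(* Let a pairwise majority rule be $\lambda$-bounded, let $Z^*$ be a point of the metric space minimizing $SC$ over the whole space, and let $\delta_I=SC(P)/\min_{Z\in\mathcal C}SC(Z)$ be the distortion of the selected candidate $P$, assumed $>1$. (i) If $|\mathcal C|=2$ and $P$ wins under the rule, then $SC(P)/SC(Z^* )\le\frac{\lambda\delta_I}{\delta_I-1}$. (ii) If $\mathcal C$ is arbitrary and $P$ is in the uncovered set of the pairwise majority graph formed by the rule, then $SC(P)/SC(Z^* )\le\frac{2\lambda\delta_I}{\delta_I-1}$.
   Context: Voters $N$ and candidates $\mathcal C$ are points of an arbitrary metric space $(X,d)$; $SC(Y)=\sum_{i\in N}d(i,Y)$ for any $Y\in X$. A pairwise majority rule decides, for each pair of candidates, which one beats the other. It is $\lambda$-bounded if whenever $P$ beats $Q$ we have $SC(P)\le SC(Q)+\lambda\,SC(Z)$ for every point $Z\in X$. A candidate $P$ is in the uncovered set of the resulting graph if for every other candidate $Z$, either $P$ beats $Z$, or there is $Y$ with $P$ beating $Y$ and $Y$ beating $Z$. *)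

theory Defs
  imports "HOL-Analysis.Analysis"
begin

text \<open>Voters are indexed by a finite set N, voter i sits at point loc i of the metric space.\<close>
definition SC :: "'v set \<Rightarrow> ('v \<Rightarrow> 'a::metric_space) \<Rightarrow> 'a \<Rightarrow> real" where
  "SC N loc Y = (\<Sum>i\<in>N. dist (loc i) Y)"

definition pairwise_majority_rule :: "'a set \<Rightarrow> ('a \<Rightarrow> 'a \<Rightarrow> bool) \<Rightarrow> bool" where
  "pairwise_majority_rule C beats \<longleftrightarrow>
     (\<forall>P Q. beats P Q \<longrightarrow> P \<in> C \<and> Q \<in> C \<and> P \<noteq> Q) \<and>
     (\<forall>P\<in>C. \<forall>Q\<in>C. P \<noteq> Q \<longrightarrow> (beats P Q \<longleftrightarrow> \<not> beats Q P))"

definition lambda_bounded ::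
  "'v set \<Rightarrow> ('v \<Rightarrow> 'a::metric_space) \<Rightarrow> ('a \<Rightarrow> 'a \<Rightarrow> bool) \<Rightarrow> real \<Rightarrow> bool" where
  "lambda_bounded N loc beats lam \<longleftrightarrow>
     (\<forall>P Q. beats P Q \<longrightarrow> (\<forall>Z. SC N loc P \<le> SC N loc Q + lam * SC N loc Z))"

definition uncovered :: "'a set \<Rightarrow> ('a \<Rightarrow> 'a \<Rightarrow> bool) \<Rightarrow> 'a \<Rightarrow> bool" where
  "uncovered C beats P \<longleftrightarrow> P \<in> C \<and>
     (\<forall>Z\<in>C. Z \<noteq> P \<longrightarrow> beats P Z \<or> (\<exists>Y\<in>C. beats P Y \<and> beats Y Z))"

definition distortion_I :: "'v set \<Rightarrow> ('v \<Rightarrow> 'a::metric_space) \<Rightarrow> 'a set \<Rightarrow> 'a \<Rightarrow> real" where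
  "distortion_I N loc C P = SC N loc P / Min (SC N loc ` C)"

end

theory Submission
  imports Defs
begin

text \<open>Let \<open>Q\<close> be the best candidate, so \<open>\<delta> = SC(P)/SC(Q)\<close>. A winner over \<open>Q\<close> satisfies
  \<open>SC(P) \<le> SC(Q) + \<lambda> SC(Z\<^sup>*)\<close>, and an uncovered candidate reaches \<open>Q\<close> in at most two steps, giving
  \<open>SC(P) \<le> SC(Q) + 2\<lambda> SC(Z\<^sup>*)\<close>. Hence \<open>SC(P) - SC(P)/\<delta> \<le> k SC(Z\<^sup>*)\<close> with \<open>k = \<lambda>\<close> resp. \<open>2\<lambda>\<close>,
  which rearranges to the claimed bound \<open>k\<delta>/(\<delta>-1)\<close>.\<close>

lemma ratio_le_of_additive_bound:
  fixes a m k s :: real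
  assumes "0 < m" "m < a" "a \<le> m + k * s" "0 \<le> s"
  shows "a / s \<le> k * (a / m) / (a / m - 1)"
proof -
  have excess: "a - m \<le> k * s" using assms(3) by linarith
  have "s > 0" using excess assms(2,4) by (cases "s = 0") auto
  have rhs: "k * (a / m) / (a / m - 1) = k * a / (a - m)"
    using assms(1) by (simp add: field_simps)
  have "a * (a - m) \<le> (k * a) * s"
    using mult_left_mono[OF excess] assms(1,2) by (simp add: algebra_simps)
  then have "a / s \<le> k * a / (a - m)"
    using \<open>s > 0\<close> assms(2) by (simp add: divide_le_eq le_divide_eq mult.commute)
  then show ?thesis unfolding rhs .
qed

lemma SC_nonneg: "0 \<le> SC N loc Y"
  unfolding SC_def by (simp add: sum_nonneg)

lemma optimal_candidate_of_distortion_gt_1: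
  assumes "finite C" "C \<noteq> {}" "distortion_I N loc C P > 1"
  obtains Q where "Q \<in> C" "0 < SC N loc Q" "SC N loc Q < SC N loc P"
    "distortion_I N loc C P = SC N loc P / SC N loc Q"
proof -
  have "Min (SC N loc ` C) \<in> SC N loc ` C" using assms(1,2) by (intro Min_in) auto
  then obtain Q where Q: "Q \<in> C" "SC N loc Q = Min (SC N loc ` C)" by auto
  then have d: "distortion_I N loc C P = SC N loc P / SC N loc Q"
    unfolding distortion_I_def by simp
  \<comment> \<open>a zero minimum would make the distortion \<open>x / 0 = 0\<close>\<close>
  have "SC N loc Q \<noteq> 0" using assms(3) d by auto
  then have "0 < SC N loc Q" using SC_nonneg[of N loc Q] by linarith
  moreover have "SC N loc Q < SC N loc P"
    using assms(3) d calculation by (simp add: field_simps)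
  ultimately show thesis using that Q(1) d by blast
qed

lemma uncovered_SC_le:
  assumes "lambda_bounded N loc beats lam" "uncovered C beats P"
    and "Q \<in> C" "SC N loc Q < SC N loc P"
  shows "SC N loc P \<le> SC N loc Q + 2 * lam * SC N loc Z"
proof -
  have step: "\<And>X Y. beats X Y \<Longrightarrow> SC N loc X \<le> SC N loc Y + lam * SC N loc Z"
    using assms(1) unfolding lambda_bounded_def by blast
  have "beats P Q \<or> (\<exists>Y\<in>C. beats P Y \<and> beats Y Q)"
    using assms(2-4) unfolding uncovered_def by auto
  then show ?thesis
  proof
    assume "beats P Q"
    \<comment> \<open>the bound itself forces \<open>\<lambda> SC(Z) > 0\<close>, so doubling it is harmless\<close>
    with step assms(4) show ?thesis by fastforce
  next
    assume "\<exists>Y\<in>C. beats P Y \<and> beats Y Q"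
    then obtain Y where "beats P Y" "beats Y Q" by blast
    then show ?thesis using step[of P Y] step[of Y Q] by linarith
  qed
qed

theorem mainTheorem13:
  fixes N :: "'v set" and loc :: "'v \<Rightarrow> 'a::metric_space" and C :: "'a set"
    and beats :: "'a \<Rightarrow> 'a \<Rightarrow> bool" and lam :: real and Zs P :: 'a
  assumes "finite N" and "finite C" and "C \<noteq> {}"
    and "pairwise_majority_rule C beats"
    and "lambda_bounded N loc beats lam"
    and "\<forall>Z. SC N loc Zs \<le> SC N loc Z"
    and "P \<in> C"
    and "distortion_I N loc C P > 1"
  shows "(card C = 2 \<and> (\<forall>Q\<in>C. Q \<noteq> P \<longrightarrow> beats P Q) \<longrightarrow>
            SC N loc P / SC N loc Zs \<le>
              lam * distortion_I N loc C P / (distortion_I N loc C P - 1))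
       \<and> (uncovered C beats P \<longrightarrow>
            SC N loc P / SC N loc Zs \<le>
              2 * lam * distortion_I N loc C P / (distortion_I N loc C P - 1))"
proof -
  obtain Q where Q: "Q \<in> C" "0 < SC N loc Q" "SC N loc Q < SC N loc P"
    and d: "distortion_I N loc C P = SC N loc P / SC N loc Q"
    using optimal_candidate_of_distortion_gt_1[OF assms(2,3,8)] by blast
  note ratio = ratio_le_of_additive_bound[OF Q(2,3) _ SC_nonneg]
  have "SC N loc P / SC N loc Zs \<le> lam * distortion_I N loc C P / (distortion_I N loc C P - 1)"
    if "\<forall>Q\<in>C. Q \<noteq> P \<longrightarrow> beats P Q"
  proof -
    have "beats P Q" using that Q by auto
    then have "SC N loc P \<le> SC N loc Q + lam * SC N loc Zs"
      using assms(5) unfolding lambda_bounded_def by blast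
    then show ?thesis unfolding d by (rule ratio)
  qed
  moreover have "SC N loc P / SC N loc Zs \<le>
      2 * lam * distortion_I N loc C P / (distortion_I N loc C P - 1)"
    if "uncovered C beats P"
    using ratio[of "2 * lam"] uncovered_SC_le[OF assms(5) that Q(1,3), of Zs] d by simp
  ultimately show ?thesis by blast
qed

end
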